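(* Let $U=u_1\cdots u_n$ be a finite word and $\lambda\in\Lambda(U)$. Then for every letter $a\ne u_{n-\lambda+1}$, the word $u_{n-\lambda+2}^{n}\,a$ (of length $\lambda$) is not a factor of $U$.
   Context: $u_i^j=u_i\cdots u_j$ (empty if $j<i$), and $\Lambda(U)=\{1\le k<n:\ u_i=u_{i+k}\text{ for all }1\le i\le n-k\}$. *)

theory Defs
  imports Main
begin

text \<open>Words are lists; the paper's 1-indexed letter u_i is U ! (i - 1).\<close>

definition letter :: "'a list \<Rightarrow> nat \<Rightarrow> 'a" where
  "letter U i = U ! (i - 1)"

definition periods :: "'a list \<Rightarrow> nat set" where
  "periods U = {k. 1 \<le> k \<and> k < length U \<and>
     (\<forall>i. 1 \<le> i \<and> i \<le> length U - k \<longrightarrow> letter U i = letter U (i + k))}"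

text \<open>The factor u_i^j = u_i ... u_j (empty if j < i), for 1 <= i, j <= n.\<close>
definition subword :: "'a list \<Rightarrow> nat \<Rightarrow> nat \<Rightarrow> 'a list" where
  "subword U i j = take (Suc j - i) (drop (i - 1) U)"

definition is_factor :: "'a list \<Rightarrow> 'a list \<Rightarrow> bool" where
  "is_factor w U \<longleftrightarrow> (\<exists>p s. U = p @ w @ s)"

end

theory Submission
  imports Defs "HOL-Library.Multiset"
begin

text \<open>If U has period \<lambda>, sliding a window of length \<lambda> one position to the right drops the
  letter u_i and appends u_(i+\<lambda>) = u_i, so all factors of length \<lambda> are anagrams of each other.
  The factor u_(n-\<lambda>+2)^n a and the final window u_(n-\<lambda>+1)^n share the first \<lambda> - 1 letters,
  hence a = u_(n-\<lambda>+1).\<close>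

lemma periods_nth:
  assumes "lam \<in> periods U"
  shows "1 \<le> lam" and "lam < length U"
    and "\<And>j. j + lam < length U \<Longrightarrow> U ! j = U ! (j + lam)"
proof -
  show "1 \<le> lam" "lam < length U" using assms by (auto simp: periods_def)
  fix j assume "j + lam < length U"
  then show "U ! j = U ! (j + lam)"
    using assms unfolding periods_def letter_def by (auto dest: spec[of _ "Suc j"])
qed

lemma mset_window_Suc:
  assumes per: "\<And>j. j + lam < length U \<Longrightarrow> U ! j = U ! (j + lam)"
    and "1 \<le> lam" and i: "i + lam < length U"
  shows "mset (take lam (drop (Suc i) U)) = mset (take lam (drop i U))"
proof -
  obtain m where m: "lam = Suc m" using \<open>1 \<le> lam\<close> by (cases lam) auto
  have "take lam (drop i U) = U ! i # take m (drop (Suc i) U)"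
    using i m by (simp add: Cons_nth_drop_Suc[symmetric])
  moreover have "take lam (drop (Suc i) U) = take m (drop (Suc i) U) @ [U ! (i + lam)]"
    using i m by (simp add: take_Suc_conv_app_nth)
  ultimately show ?thesis using per[OF i] by simp
qed

lemma mset_window_eq:
  assumes "\<And>j. j + lam < length U \<Longrightarrow> U ! j = U ! (j + lam)"
    and "1 \<le> lam"
  shows "i + lam \<le> length U \<Longrightarrow> mset (take lam (drop i U)) = mset (take lam U)"
proof (induction i)
  case (Suc i)
  then show ?case using mset_window_Suc[OF assms, of i] by simp
qed simp

lemma subword_suffix:
  assumes "1 \<le> lam" "lam \<le> length U"
  shows "subword U (length U - lam + 2) (length U) = drop (length U - lam + 1) U"
  using assms by (simp add: subword_def)

theorem lemma5p3:
  fixes U :: "'a list" and lam :: nat and a :: 'a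
  assumes "lam \<in> periods U"
    and "a \<noteq> letter U (length U - lam + 1)"
  shows "\<not> is_factor (subword U (length U - lam + 2) (length U) @ [a]) U"
proof
  define n where "n = length U"
  define x where "x = drop (n - lam + 1) U"
  note per = periods_nth[OF assms(1)]
  assume "is_factor (subword U (length U - lam + 2) (length U) @ [a]) U"
  then obtain p s where U: "U = p @ (x @ [a]) @ s"
    unfolding is_factor_def subword_suffix[OF per(1) less_imp_le[OF per(2)]] x_def n_def by auto
  have "length x = lam - 1" using per(1,2) by (simp add: x_def n_def)
  then have "take lam (drop (length p) U) = x @ [a]" and "length p + lam \<le> n"
    using U per(1) by (simp_all add: n_def)
  moreover have "drop (n - lam) U = U ! (n - lam) # x"
    using per(1,2) by (simp add: x_def n_def Cons_nth_drop_Suc Suc_diff_le)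
  ultimately have "mset (x @ [a]) = mset (U ! (n - lam) # x)"
    using mset_window_eq[OF per(3,1), of "length p"] mset_window_eq[OF per(3,1), of "n - lam"]
      \<open>length x = lam - 1\<close> per(1) by (simp add: n_def)
  then have "a = U ! (n - lam)" by (simp add: add_mset_eq_single)
  with assms(2) show False by (simp add: letter_def n_def)
qed

end
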